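(* Let $(P,(J_c)_{c\in\mathcal C})$ be an existential doctrinal site and $J_\rtimes$ its existential topology on $\mathcal C\rtimes P$. Then the geometric completion $\mathfrak I(P,J_\rtimes)$ is isomorphic to the point-wise ideal completion of $P$: namely, to the doctrine sending $c\in\mathcal C$ to the frame $J_c\text{-}\mathrm{Idl}(P(c))$ and sending $f:d\to c$ to the map $J_c\text{-}\mathrm{Idl}(P(c))\to J_d\text{-}\mathrm{Idl}(P(d))$, $I\mapsto\{y\in P(d):\exists_f y\in I\}$.
   Context: For a doctrine $P:\mathcal C^{op}\to\mathbf{PreOrd}$, $\mathcal C\rtimes P$ has objects $(c,x)$, $x\in P(c)$, and morphisms $f:(c,x)\to(d,y)$ the $f:c\to d$ in $\mathcal C$ with $x\le P(f)(y)$. Existential doctrinal site: a doctrine $P$ such that for each $f:d\to c$ in $\mathcal C$, $P(f):P(c)\to P(d)$ has a left adjoint $\exists_f:P(d)\to P(c)$, together with a Grothendieck topology $J_c$ on each preorder $P(c)$ (viewed as a category) such that each $\exists_f$ sends $J_d$-covering sieves to $J_c$-covering families, satisfying: (relative Frobenius) for each sieve $S$ on $(d,y)$ in $\mathcal C\rtimes P$ such that $\{\exists_f z\le y: (f:(c,z)\to(d,y))\in S\}$ generates a $J_d$-covering sieve on $y$, and each $x\le y$ in $P(d)$, the family $\{\exists_f z\le x: (f:(c,z)\to(d,y))\in S,\ z\le P(f)(x)\}$ generates a $J_d$-covering sieve on $x$; (relative Beck–Chevalley) for each such $S$ and each $h:e\to d$ in $\mathcal C$, the family $\{\exists_gz\le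 P(h)(y): g:(c,z)\to(e,P(h)(y))\text{ in }\mathcal C\rtimes P,\ h\circ g\in S\}$ generates a $J_e$-covering sieve on $P(h)(y)$. The existential topology $J_\rtimes$ on $\mathcal C\rtimes P$: a sieve $\{f_i:(c_i,x_i)\to(d,y)\}_i$ is $J_\rtimes$-covering iff $\{\exists_{f_i}x_i\le y\}_i$ generates a $J_d$-covering sieve on $y$. For a preorder $Q$ with Grothendieck topology $K$, $K\text{-}\mathrm{Idl}(Q)$ is the frame, ordered by inclusion, of down-sets $I\subseteq Q$ that are $K$-closed: if $\{y_j\le x\}$ generates a $K$-covering sieve on $x$ and all $y_j\in I$ then $x\in I$. Geometric completion $\mathfrak I(P,J)$ for a topology $J$ on $\mathcal C\rtimes P$: $\mathfrak I(P,J)(c)$ is the inclusion-ordered set of sets $S$ of pairs $(f,x)$, $f:d\to c$, $x\in P(d)$ such that (a) $(f,x)\in S$, $g:e\to d$, $y\le P(g)(x)$ imply $(f\circ g,y)\in S$; (b) if $\{h_i:(e_i,y_i)\to(d,x)\}$ is $J$-covering and all $(f\circ h_i,y_i)\in S$ then $(f,x)\in S$; with $\mathfrak I(P,J)(f)(S)=\{(g,y):(f\circ g,y)\in S\}$. *)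

theory Defs
  imports Main
begin

record ('o,'m) cat =
  obj   :: "'o set"
  arr   :: "'m set"
  cdom  :: "'m \<Rightarrow> 'o"
  ccod  :: "'m \<Rightarrow> 'o"
  ccomp :: "'m \<Rightarrow> 'm \<Rightarrow> 'm"   (* ccomp g f = g \<circ> f, f first *)
  cid   :: "'o \<Rightarrow> 'm"

definition is_category :: "('o,'m) cat \<Rightarrow> bool" where
  "is_category C \<longleftrightarrow>
     (\<forall>f\<in>arr C. cdom C f \<in> obj C \<and> ccod C f \<in> obj C) \<and>
     (\<forall>c\<in>obj C. cid C c \<in> arr C \<and> cdom C (cid C c) = c \<and> ccod C (cid C c) = c) \<and>
     (\<forall>f\<in>arr C. \<forall>g\<in>arr C. ccod C f = cdom C g \<longrightarrow>
        ccomp C g f \<in> arr C \<and> cdom C (ccomp C g f) = cdom C f \<and> ccod C (ccomp C g f) = ccod C g) \<and>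
     (\<forall>f\<in>arr C. ccomp C f (cid C (cdom C f)) = f \<and> ccomp C (cid C (ccod C f)) f = f) \<and>
     (\<forall>f\<in>arr C. \<forall>g\<in>arr C. \<forall>h\<in>arr C. ccod C f = cdom C g \<longrightarrow> ccod C g = cdom C h \<longrightarrow>
        ccomp C h (ccomp C g f) = ccomp C (ccomp C h g) f)"

record ('o,'m,'x) doctrine =
  carr  :: "'o \<Rightarrow> 'x set"
  leq   :: "'o \<Rightarrow> 'x \<Rightarrow> 'x \<Rightarrow> bool"
  reidx :: "'m \<Rightarrow> 'x \<Rightarrow> 'x"             (* P(f) : P(cod f) \<rightarrow> P(dom f) *)

definition is_doctrine :: "('o,'m) cat \<Rightarrow> ('o,'m,'x) doctrine \<Rightarrow> bool" where
  "is_doctrine C P \<longleftrightarrow>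
     (\<forall>c\<in>obj C. (\<forall>x\<in>carr P c. leq P c x x) \<and>
        (\<forall>x\<in>carr P c. \<forall>y\<in>carr P c. \<forall>z\<in>carr P c. leq P c x y \<longrightarrow> leq P c y z \<longrightarrow> leq P c x z)) \<and>
     (\<forall>f\<in>arr C. \<forall>x\<in>carr P (ccod C f). reidx P f x \<in> carr P (cdom C f)) \<and>
     (\<forall>f\<in>arr C. \<forall>x\<in>carr P (ccod C f). \<forall>y\<in>carr P (ccod C f).
        leq P (ccod C f) x y \<longrightarrow> leq P (cdom C f) (reidx P f x) (reidx P f y)) \<and>
     (\<forall>c\<in>obj C. \<forall>x\<in>carr P c. reidx P (cid C c) x = x) \<and>
     (\<forall>f\<in>arr C. \<forall>g\<in>arr C. ccod C f = cdom C g \<longrightarrow>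
        (\<forall>x\<in>carr P (ccod C g). reidx P (ccomp C g f) x = reidx P f (reidx P g x)))"

text \<open>K x S means: S is a K-covering sieve on x.\<close>

definition down_set :: "'x set \<Rightarrow> ('x \<Rightarrow> 'x \<Rightarrow> bool) \<Rightarrow> 'x \<Rightarrow> 'x set" where
  "down_set Q le x = {y\<in>Q. le y x}"

definition is_sieve_po :: "'x set \<Rightarrow> ('x \<Rightarrow> 'x \<Rightarrow> bool) \<Rightarrow> 'x \<Rightarrow> 'x set \<Rightarrow> bool" where
  "is_sieve_po Q le x S \<longleftrightarrow> S \<subseteq> down_set Q le x \<and> (\<forall>y\<in>S. \<forall>z\<in>Q. le z y \<longrightarrow> z \<in> S)"

definition gen_sieve :: "'x set \<Rightarrow> ('x \<Rightarrow> 'x \<Rightarrow> bool) \<Rightarrow> 'x set \<Rightarrow> 'x set" where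
  "gen_sieve Q le F = {z\<in>Q. \<exists>w\<in>F. le z w}"

definition is_groth_top_po :: "'x set \<Rightarrow> ('x \<Rightarrow> 'x \<Rightarrow> bool) \<Rightarrow> ('x \<Rightarrow> 'x set \<Rightarrow> bool) \<Rightarrow> bool" where
  "is_groth_top_po Q le K \<longleftrightarrow>
     (\<forall>x S. K x S \<longrightarrow> x \<in> Q \<and> is_sieve_po Q le x S) \<and>
     (\<forall>x\<in>Q. K x (down_set Q le x)) \<and>
     (\<forall>x S y. K x S \<longrightarrow> y \<in> Q \<longrightarrow> le y x \<longrightarrow> K y {z\<in>S. le z y}) \<and>
     (\<forall>x S R. K x S \<longrightarrow> is_sieve_po Q le x R \<longrightarrow> (\<forall>y\<in>S. K y {z\<in>R. le z y}) \<longrightarrow> K x R)"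

definition K_Idl :: "'x set \<Rightarrow> ('x \<Rightarrow> 'x \<Rightarrow> bool) \<Rightarrow> ('x \<Rightarrow> 'x set \<Rightarrow> bool) \<Rightarrow> 'x set set" where
  "K_Idl Q le K = {I. I \<subseteq> Q \<and> (\<forall>y\<in>I. \<forall>z\<in>Q. le z y \<longrightarrow> z \<in> I) \<and>
      (\<forall>x\<in>Q. \<forall>F. F \<subseteq> down_set Q le x \<longrightarrow> K x (gen_sieve Q le F) \<longrightarrow> F \<subseteq> I \<longrightarrow> x \<in> I)}"

definition has_left_adjoints :: "('o,'m) cat \<Rightarrow> ('o,'m,'x) doctrine \<Rightarrow> ('m \<Rightarrow> 'x \<Rightarrow> 'x) \<Rightarrow> bool" where
  "has_left_adjoints C P ex \<longleftrightarrow>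
     (\<forall>f\<in>arr C. \<forall>y\<in>carr P (cdom C f). ex f y \<in> carr P (ccod C f) \<and>
        (\<forall>x\<in>carr P (ccod C f). leq P (ccod C f) (ex f y) x \<longleftrightarrow> leq P (cdom C f) y (reidx P f x)))"

text \<open>Objects of C \<rtimes> P are pairs (c,x); a morphism into (d,y) with source (c,z) is
  represented by the pair (f,z), f : c \<rightarrow> d, with z \<le> P(f)(y).\<close>
definition arrows_into :: "('o,'m) cat \<Rightarrow> ('o,'m,'x) doctrine \<Rightarrow> 'o \<Rightarrow> 'x \<Rightarrow> ('m \<times> 'x) set" where
  "arrows_into C P d y = {(f,z). f \<in> arr C \<and> ccod C f = d \<and> z \<in> carr P (cdom C f) \<and>
                                   leq P (cdom C f) z (reidx P f y)}"

definition is_sieve_rtimes :: "('o,'m) cat \<Rightarrow> ('o,'m,'x) doctrine \<Rightarrow> 'o \<Rightarrow> 'x \<Rightarrow> ('m \<times> 'x) set \<Rightarrow> bool" where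
  "is_sieve_rtimes C P d y S \<longleftrightarrow> S \<subseteq> arrows_into C P d y \<and>
     (\<forall>(f,z)\<in>S. \<forall>g\<in>arr C. \<forall>w. ccod C g = cdom C f \<longrightarrow> w \<in> carr P (cdom C g) \<longrightarrow>
        leq P (cdom C g) w (reidx P g z) \<longrightarrow> (ccomp C f g, w) \<in> S)"

text \<open>The existential topology: a family of arrows into (d,y) is J\<rtimes>-covering iff
  the family of the \<exists>_f z generates a J_d-covering sieve on y.\<close>
definition exi_cov :: "('o,'m) cat \<Rightarrow> ('o,'m,'x) doctrine \<Rightarrow> ('m \<Rightarrow> 'x \<Rightarrow> 'x) \<Rightarrow>
    ('o \<Rightarrow> 'x \<Rightarrow> 'x set \<Rightarrow> bool) \<Rightarrow> 'o \<Rightarrow> 'x \<Rightarrow> ('m \<times> 'x) set \<Rightarrow> bool" where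
  "exi_cov C P ex J d y S \<longleftrightarrow>
     J d y (gen_sieve (carr P d) (leq P d) {ex f z | f z. (f,z) \<in> S})"

definition existential_doctrinal_site :: "('o,'m) cat \<Rightarrow> ('o,'m,'x) doctrine \<Rightarrow>
    ('m \<Rightarrow> 'x \<Rightarrow> 'x) \<Rightarrow> ('o \<Rightarrow> 'x \<Rightarrow> 'x set \<Rightarrow> bool) \<Rightarrow> bool" where
  "existential_doctrinal_site C P ex J \<longleftrightarrow>
     is_category C \<and> is_doctrine C P \<and> has_left_adjoints C P ex \<and>
     (\<forall>c\<in>obj C. is_groth_top_po (carr P c) (leq P c) (J c)) \<and>
     \<comment> \<open>\<exists>_f sends J_d-covering sieves to J_c-covering families\<close>
     (\<forall>f\<in>arr C. \<forall>y S. J (cdom C f) y S \<longrightarrow>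
        J (ccod C f) (ex f y) (gen_sieve (carr P (ccod C f)) (leq P (ccod C f)) (ex f ` S))) \<and>
     \<comment> \<open>relative Frobenius\<close>
     (\<forall>d\<in>obj C. \<forall>y\<in>carr P d. \<forall>S. is_sieve_rtimes C P d y S \<longrightarrow> exi_cov C P ex J d y S \<longrightarrow>
        (\<forall>x\<in>carr P d. leq P d x y \<longrightarrow>
           J d x (gen_sieve (carr P d) (leq P d)
                    {ex f z | f z. (f,z) \<in> S \<and> leq P (cdom C f) z (reidx P f x)}))) \<and>
     \<comment> \<open>relative Beck--Chevalley\<close>
     (\<forall>d\<in>obj C. \<forall>y\<in>carr P d. \<forall>S. is_sieve_rtimes C P d y S \<longrightarrow> exi_cov C P ex J d y S \<longrightarrow>
        (\<forall>h\<in>arr C. ccod C h = d \<longrightarrow>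
           J (cdom C h) (reidx P h y) (gen_sieve (carr P (cdom C h)) (leq P (cdom C h))
              {ex g z | g z. (g,z) \<in> arrows_into C P (cdom C h) (reidx P h y) \<and>
                             (ccomp C h g, z) \<in> S})))"

definition geom_compl :: "('o,'m) cat \<Rightarrow> ('o,'m,'x) doctrine \<Rightarrow> ('m \<Rightarrow> 'x \<Rightarrow> 'x) \<Rightarrow>
    ('o \<Rightarrow> 'x \<Rightarrow> 'x set \<Rightarrow> bool) \<Rightarrow> 'o \<Rightarrow> ('m \<times> 'x) set set" where
  "geom_compl C P ex J c = {S.
     S \<subseteq> {(f,x). f \<in> arr C \<and> ccod C f = c \<and> x \<in> carr P (cdom C f)} \<and>
     (\<forall>(f,x)\<in>S. \<forall>g\<in>arr C. \<forall>y. ccod C g = cdom C f \<longrightarrow> y \<in> carr P (cdom C g) \<longrightarrow>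
        leq P (cdom C g) y (reidx P g x) \<longrightarrow> (ccomp C f g, y) \<in> S) \<and>
     (\<forall>f\<in>arr C. \<forall>x\<in>carr P (cdom C f). ccod C f = c \<longrightarrow>
        (\<forall>H. H \<subseteq> arrows_into C P (cdom C f) x \<longrightarrow> exi_cov C P ex J (cdom C f) x H \<longrightarrow>
           (\<forall>(h,y)\<in>H. (ccomp C f h, y) \<in> S) \<longrightarrow> (f,x) \<in> S))}"

definition geom_compl_map :: "('o,'m) cat \<Rightarrow> ('o,'m,'x) doctrine \<Rightarrow> 'm \<Rightarrow>
    ('m \<times> 'x) set \<Rightarrow> ('m \<times> 'x) set" where
  "geom_compl_map C P f S = {(g,y). g \<in> arr C \<and> ccod C g = cdom C f \<and> y \<in> carr P (cdom C g) \<and>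
                                   (ccomp C f g, y) \<in> S}"

definition ideal_compl :: "('o,'m,'x) doctrine \<Rightarrow> ('o \<Rightarrow> 'x \<Rightarrow> 'x set \<Rightarrow> bool) \<Rightarrow> 'o \<Rightarrow> 'x set set" where
  "ideal_compl P J c = K_Idl (carr P c) (leq P c) (J c)"

definition ideal_compl_map :: "('o,'m) cat \<Rightarrow> ('o,'m,'x) doctrine \<Rightarrow> ('m \<Rightarrow> 'x \<Rightarrow> 'x) \<Rightarrow>
    'm \<Rightarrow> 'x set \<Rightarrow> 'x set" where
  "ideal_compl_map C P ex f I = {y \<in> carr P (cdom C f). ex f y \<in> I}"

end

theory Submission
  imports Defs
begin

text \<open>An element \<open>S\<close> of \<open>\<II>(P,J\<rtimes>)(c)\<close> is determined by the elements \<open>x \<in> P(c)\<close> with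
  \<open>(id\<^sub>c, x) \<in> S\<close>: for \<open>f : d \<rightarrow> c\<close> and \<open>x \<in> P(d)\<close>, the arrow \<open>f : (d,x) \<rightarrow> (c,\<exists>\<^sub>f x)\<close> is by itself
  \<open>J\<rtimes>\<close>-covering, and conversely \<open>(f,x)\<close> is a restriction of \<open>(id\<^sub>c,\<exists>\<^sub>f x)\<close> because
  \<open>x \<le> P(f)(\<exists>\<^sub>f x)\<close>; hence \<open>(f,x) \<in> S\<close> iff \<open>(id\<^sub>c,\<exists>\<^sub>f x) \<in> S\<close>.  The closure conditions on \<open>S\<close>
  translate into \<open>J\<^sub>c\<close>-closedness of the down-set \<open>{x. (id\<^sub>c,x) \<in> S}\<close>, and every \<open>J\<^sub>c\<close>-ideal
  \<open>I\<close> arises from \<open>{(f,x). \<exists>\<^sub>f x \<in> I}\<close>, which is \<open>J\<rtimes>\<close>-closed because \<open>\<exists>\<^sub>f\<close> preserves covers.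
  Naturality is the same equivalence read at the identity of the domain.\<close>

locale existential_doctrine =
  fixes C :: "('o,'m) cat" and P :: "('o,'m,'x) doctrine" and ex :: "'m \<Rightarrow> 'x \<Rightarrow> 'x"
  assumes category: "is_category C"
    and doctrine: "is_doctrine C P"
    and left_adjoints: "has_left_adjoints C P ex"
begin

lemma cid_in_arr [simp]: "c \<in> obj C \<Longrightarrow> cid C c \<in> arr C"
  and cdom_cid [simp]: "c \<in> obj C \<Longrightarrow> cdom C (cid C c) = c"
  and ccod_cid [simp]: "c \<in> obj C \<Longrightarrow> ccod C (cid C c) = c"
  using category unfolding is_category_def by blast+

lemma cdom_in_obj: "f \<in> arr C \<Longrightarrow> cdom C f \<in> obj C"
  and ccod_in_obj: "f \<in> arr C \<Longrightarrow> ccod C f \<in> obj C"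
  using category unfolding is_category_def by blast+

lemma ccomp_in_arr: "f \<in> arr C \<Longrightarrow> g \<in> arr C \<Longrightarrow> ccod C f = cdom C g \<Longrightarrow> ccomp C g f \<in> arr C"
  and cdom_ccomp: "f \<in> arr C \<Longrightarrow> g \<in> arr C \<Longrightarrow> ccod C f = cdom C g \<Longrightarrow> cdom C (ccomp C g f) = cdom C f"
  and ccod_ccomp: "f \<in> arr C \<Longrightarrow> g \<in> arr C \<Longrightarrow> ccod C f = cdom C g \<Longrightarrow> ccod C (ccomp C g f) = ccod C g"
  using category unfolding is_category_def by blast+

lemma ccomp_cid_left: "f \<in> arr C \<Longrightarrow> ccomp C (cid C (ccod C f)) f = f"
  and ccomp_cid_right: "f \<in> arr C \<Longrightarrow> ccomp C f (cid C (cdom C f)) = f"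
  using category unfolding is_category_def by blast+

lemma leq_refl: "c \<in> obj C \<Longrightarrow> x \<in> carr P c \<Longrightarrow> leq P c x x"
  using doctrine unfolding is_doctrine_def by blast

lemma leq_trans:
  "c \<in> obj C \<Longrightarrow> x \<in> carr P c \<Longrightarrow> y \<in> carr P c \<Longrightarrow> z \<in> carr P c \<Longrightarrow>
   leq P c x y \<Longrightarrow> leq P c y z \<Longrightarrow> leq P c x z"
  using doctrine unfolding is_doctrine_def by blast

lemma reidx_in_carr: "f \<in> arr C \<Longrightarrow> x \<in> carr P (ccod C f) \<Longrightarrow> reidx P f x \<in> carr P (cdom C f)"
  using doctrine unfolding is_doctrine_def by blast

lemma reidx_mono:
  "f \<in> arr C \<Longrightarrow> x \<in> carr P (ccod C f) \<Longrightarrow> y \<in> carr P (ccod C f) \<Longrightarrow>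
   leq P (ccod C f) x y \<Longrightarrow> leq P (cdom C f) (reidx P f x) (reidx P f y)"
  using doctrine unfolding is_doctrine_def by blast

lemma reidx_cid: "c \<in> obj C \<Longrightarrow> x \<in> carr P c \<Longrightarrow> reidx P (cid C c) x = x"
  using doctrine unfolding is_doctrine_def by blast

lemma reidx_ccomp:
  "f \<in> arr C \<Longrightarrow> g \<in> arr C \<Longrightarrow> ccod C f = cdom C g \<Longrightarrow> x \<in> carr P (ccod C g) \<Longrightarrow>
   reidx P (ccomp C g f) x = reidx P f (reidx P g x)"
  using doctrine unfolding is_doctrine_def by blast

lemma ex_in_carr: "f \<in> arr C \<Longrightarrow> y \<in> carr P (cdom C f) \<Longrightarrow> ex f y \<in> carr P (ccod C f)"
  using left_adjoints unfolding has_left_adjoints_def by blast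

lemma ex_leq_iff:
  "f \<in> arr C \<Longrightarrow> y \<in> carr P (cdom C f) \<Longrightarrow> x \<in> carr P (ccod C f) \<Longrightarrow>
   leq P (ccod C f) (ex f y) x \<longleftrightarrow> leq P (cdom C f) y (reidx P f x)"
  using left_adjoints unfolding has_left_adjoints_def by blast

lemma leq_reidx_ex: "f \<in> arr C \<Longrightarrow> x \<in> carr P (cdom C f) \<Longrightarrow> leq P (cdom C f) x (reidx P f (ex f x))"
  using ex_leq_iff[of f x "ex f x"] ex_in_carr leq_refl ccod_in_obj by blast

lemma ex_mono:
  "f \<in> arr C \<Longrightarrow> x \<in> carr P (cdom C f) \<Longrightarrow> y \<in> carr P (cdom C f) \<Longrightarrow>
   leq P (cdom C f) x y \<Longrightarrow> leq P (ccod C f) (ex f x) (ex f y)"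
  by (meson cdom_in_obj ex_in_carr ex_leq_iff reidx_in_carr leq_trans leq_reidx_ex)

lemma ex_cid_leq: "c \<in> obj C \<Longrightarrow> x \<in> carr P c \<Longrightarrow> leq P c (ex (cid C c) x) x"
  using ex_leq_iff[of "cid C c" x x] reidx_cid leq_refl by simp

lemma leq_ex_cid: "c \<in> obj C \<Longrightarrow> x \<in> carr P c \<Longrightarrow> leq P c x (ex (cid C c) x)"
  using leq_reidx_ex[of "cid C c" x] reidx_cid ex_in_carr[of "cid C c" x] by simp

lemma ex_ex_leq_ex_ccomp:
  assumes f: "f \<in> arr C" and h: "h \<in> arr C" "ccod C h = cdom C f" and y: "y \<in> carr P (cdom C h)"
  shows "leq P (ccod C f) (ex f (ex h y)) (ex (ccomp C f h) y)"
proof -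
  let ?w = "ex (ccomp C f h) y"
  have fh: "ccomp C f h \<in> arr C" "cdom C (ccomp C f h) = cdom C h" "ccod C (ccomp C f h) = ccod C f"
    using ccomp_in_arr cdom_ccomp ccod_ccomp h f by auto
  have w: "?w \<in> carr P (ccod C f)"
    using ex_in_carr[of "ccomp C f h" y] fh y by simp
  have "leq P (cdom C h) y (reidx P h (reidx P f ?w))"
    using leq_reidx_ex[of "ccomp C f h" y] fh y reidx_ccomp[OF h(1) f h(2)] w by simp
  then have "leq P (ccod C h) (ex h y) (reidx P f ?w)"
    using ex_leq_iff[of h y "reidx P f ?w"] h y reidx_in_carr[OF f] w by simp
  then show ?thesis
    using ex_leq_iff[of f "ex h y" ?w] f h y w ex_in_carr[of h y] by simp
qed

end

locale existential_site = existential_doctrine C P ex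
  for C :: "('o,'m) cat" and P :: "('o,'m,'x) doctrine" and ex :: "'m \<Rightarrow> 'x \<Rightarrow> 'x" +
  fixes J :: "'o \<Rightarrow> 'x \<Rightarrow> 'x set \<Rightarrow> bool"
  assumes topology: "c \<in> obj C \<Longrightarrow> is_groth_top_po (carr P c) (leq P c) (J c)"
    and ex_preserves_covers:
      "f \<in> arr C \<Longrightarrow> J (cdom C f) y S \<Longrightarrow>
       J (ccod C f) (ex f y) (gen_sieve (carr P (ccod C f)) (leq P (ccod C f)) (ex f ` S))"

lemma existential_site_if_existential_doctrinal_site:
  assumes "existential_doctrinal_site C P ex J"
  shows "existential_site C P ex J"
proof unfold_locales
  show "is_category C" "is_doctrine C P" "has_left_adjoints C P ex"
    using assms unfolding existential_doctrinal_site_def by blast+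
  show "c \<in> obj C \<Longrightarrow> is_groth_top_po (carr P c) (leq P c) (J c)" for c
    using assms unfolding existential_doctrinal_site_def by blast
  show "f \<in> arr C \<Longrightarrow> J (cdom C f) y S \<Longrightarrow>
      J (ccod C f) (ex f y) (gen_sieve (carr P (ccod C f)) (leq P (ccod C f)) (ex f ` S))" for f y S
    using assms unfolding existential_doctrinal_site_def by blast
qed

lemma mem_geom_complD:
  assumes "S \<in> geom_compl C P ex J c"
  shows "(f,x) \<in> S \<Longrightarrow> f \<in> arr C \<and> ccod C f = c \<and> x \<in> carr P (cdom C f)"
    and "(f,x) \<in> S \<Longrightarrow> g \<in> arr C \<Longrightarrow> ccod C g = cdom C f \<Longrightarrow> y \<in> carr P (cdom C g) \<Longrightarrow>
         leq P (cdom C g) y (reidx P g x) \<Longrightarrow> (ccomp C f g, y) \<in> S"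
    and "f \<in> arr C \<Longrightarrow> ccod C f = c \<Longrightarrow> x \<in> carr P (cdom C f) \<Longrightarrow>
         H \<subseteq> arrows_into C P (cdom C f) x \<Longrightarrow> exi_cov C P ex J (cdom C f) x H \<Longrightarrow>
         (\<And>h y. (h,y) \<in> H \<Longrightarrow> (ccomp C f h, y) \<in> S) \<Longrightarrow> (f,x) \<in> S"
proof -
  have S: "S \<subseteq> {(f,x). f \<in> arr C \<and> ccod C f = c \<and> x \<in> carr P (cdom C f)} \<and>
     (\<forall>(f,x)\<in>S. \<forall>g\<in>arr C. \<forall>y. ccod C g = cdom C f \<longrightarrow> y \<in> carr P (cdom C g) \<longrightarrow>
        leq P (cdom C g) y (reidx P g x) \<longrightarrow> (ccomp C f g, y) \<in> S) \<and>
     (\<forall>f\<in>arr C. \<forall>x\<in>carr P (cdom C f). ccod C f = c \<longrightarrow>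
        (\<forall>H. H \<subseteq> arrows_into C P (cdom C f) x \<longrightarrow> exi_cov C P ex J (cdom C f) x H \<longrightarrow>
           (\<forall>(h,y)\<in>H. (ccomp C f h, y) \<in> S) \<longrightarrow> (f,x) \<in> S))"
    using assms unfolding geom_compl_def by (rule CollectD)
  show "(f,x) \<in> S \<Longrightarrow> f \<in> arr C \<and> ccod C f = c \<and> x \<in> carr P (cdom C f)"
    using S[THEN conjunct1] by blast
  show "(f,x) \<in> S \<Longrightarrow> g \<in> arr C \<Longrightarrow> ccod C g = cdom C f \<Longrightarrow> y \<in> carr P (cdom C g) \<Longrightarrow>
        leq P (cdom C g) y (reidx P g x) \<Longrightarrow> (ccomp C f g, y) \<in> S"
    using S[THEN conjunct2, THEN conjunct1] by fast
  show "f \<in> arr C \<Longrightarrow> ccod C f = c \<Longrightarrow> x \<in> carr P (cdom C f) \<Longrightarrow>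
        H \<subseteq> arrows_into C P (cdom C f) x \<Longrightarrow> exi_cov C P ex J (cdom C f) x H \<Longrightarrow>
        (\<And>h y. (h,y) \<in> H \<Longrightarrow> (ccomp C f h, y) \<in> S) \<Longrightarrow> (f,x) \<in> S"
    using S[THEN conjunct2, THEN conjunct2] by (simp add: case_prod_beta)
qed

lemma mem_ideal_complD:
  assumes "I \<in> ideal_compl P J c"
  shows "I \<subseteq> carr P c"
    and "y \<in> I \<Longrightarrow> z \<in> carr P c \<Longrightarrow> leq P c z y \<Longrightarrow> z \<in> I"
    and "x \<in> carr P c \<Longrightarrow> F \<subseteq> down_set (carr P c) (leq P c) x \<Longrightarrow>
         J c x (gen_sieve (carr P c) (leq P c) F) \<Longrightarrow> F \<subseteq> I \<Longrightarrow> x \<in> I"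
  using assms unfolding ideal_compl_def K_Idl_def by blast+

definition ideal_of_sieve :: "('o,'m) cat \<Rightarrow> ('o,'m,'x) doctrine \<Rightarrow> 'o \<Rightarrow> ('m \<times> 'x) set \<Rightarrow> 'x set"
  where "ideal_of_sieve C P c S = {x \<in> carr P c. (cid C c, x) \<in> S}"

definition sieve_of_ideal ::
    "('o,'m) cat \<Rightarrow> ('o,'m,'x) doctrine \<Rightarrow> ('m \<Rightarrow> 'x \<Rightarrow> 'x) \<Rightarrow> 'o \<Rightarrow> 'x set \<Rightarrow> ('m \<times> 'x) set"
  where "sieve_of_ideal C P ex c I =
    {(f,x). f \<in> arr C \<and> ccod C f = c \<and> x \<in> carr P (cdom C f) \<and> ex f x \<in> I}"

context existential_site
begin

lemma cover_subset_down_set: "c \<in> obj C \<Longrightarrow> J c x S \<Longrightarrow> S \<subseteq> down_set (carr P c) (leq P c) x"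
  using topology[of c, unfolded is_groth_top_po_def, THEN conjunct1]
  unfolding is_sieve_po_def by blast

lemma down_set_covers: "c \<in> obj C \<Longrightarrow> x \<in> carr P c \<Longrightarrow> J c x (down_set (carr P c) (leq P c) x)"
  using topology[of c, unfolded is_groth_top_po_def, THEN conjunct2, THEN conjunct1] by blast

lemma mem_geom_compl_iff_ex:
  assumes S: "S \<in> geom_compl C P ex J c"
    and f: "f \<in> arr C" "ccod C f = c" and x: "x \<in> carr P (cdom C f)"
  shows "(f,x) \<in> S \<longleftrightarrow> (cid C c, ex f x) \<in> S"
proof
  have c: "c \<in> obj C" using ccod_in_obj f by blast
  have e: "ex f x \<in> carr P c" using ex_in_carr f x by blast
  have unit: "leq P (cdom C f) x (reidx P f (ex f x))" using leq_reidx_ex f x by blast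
  show "(cid C c, ex f x) \<in> S" if fx: "(f,x) \<in> S"
  proof (rule mem_geom_complD(3)[OF S])
    have "gen_sieve (carr P c) (leq P c) {ex g z | g z. (g,z) \<in> {(f,x)}} =
          down_set (carr P c) (leq P c) (ex f x)"
      unfolding gen_sieve_def down_set_def by auto
    then show "exi_cov C P ex J (cdom C (cid C c)) (ex f x) {(f,x)}"
      unfolding exi_cov_def using c down_set_covers[OF c e] by simp
    show "{(f,x)} \<subseteq> arrows_into C P (cdom C (cid C c)) (ex f x)"
      unfolding arrows_into_def using c f x unit by simp
    show "(ccomp C (cid C c) h, y) \<in> S" if "(h,y) \<in> {(f,x)}" for h y
      using that fx ccomp_cid_left[OF f(1)] f(2) by simp
  qed (use c e in simp_all)
  show "(f,x) \<in> S" if "(cid C c, ex f x) \<in> S"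
    using mem_geom_complD(2)[OF S that f(1) _ x] c f unit ccomp_cid_left[OF f(1)] by simp
qed

lemma ideal_of_sieve_in_ideal_compl:
  assumes S: "S \<in> geom_compl C P ex J c" and c: "c \<in> obj C"
  shows "ideal_of_sieve C P c S \<in> ideal_compl P J c"
proof -
  have down_closed: "(cid C c, z) \<in> S"
    if "(cid C c, y) \<in> S" "y \<in> carr P c" "z \<in> carr P c" "leq P c z y" for y z
    using mem_geom_complD(2)[OF S that(1), of "cid C c" z] that c reidx_cid ccomp_cid_left[of "cid C c"]
    by simp
  have cover_closed: "(cid C c, x) \<in> S"
    if x: "x \<in> carr P c" and F: "F \<subseteq> down_set (carr P c) (leq P c) x"
      and JF: "J c x (gen_sieve (carr P c) (leq P c) F)" and FS: "\<forall>z\<in>F. (cid C c, z) \<in> S" for x F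
  proof (rule mem_geom_complD(3)[OF S])
    let ?H = "{(cid C c, z) | z. z \<in> F}"
    have Fc: "F \<subseteq> carr P c" using F unfolding down_set_def by auto
    have "gen_sieve (carr P c) (leq P c) {ex g z | g z. (g,z) \<in> ?H} = gen_sieve (carr P c) (leq P c) F"
    proof -
      have e: "ex (cid C c) w \<in> carr P c" if "w \<in> F" for w
        using ex_in_carr[of "cid C c" w] c Fc that by auto
      show ?thesis
        unfolding gen_sieve_def
        by (rule set_eqI, rule iffI)
          (use ex_cid_leq[OF c] leq_ex_cid[OF c] e Fc leq_trans[OF c] in blast)+
    qed
    then show "exi_cov C P ex J (cdom C (cid C c)) x ?H"
      unfolding exi_cov_def using c JF by simp
    show "?H \<subseteq> arrows_into C P (cdom C (cid C c)) x"
      using F c reidx_cid[OF c x] unfolding arrows_into_def down_set_def by auto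
    show "(ccomp C (cid C c) h, y) \<in> S" if "(h,y) \<in> ?H" for h y
      using that FS ccomp_cid_left[of "cid C c"] c by auto
  qed (use c x in simp_all)
  show ?thesis
    unfolding ideal_compl_def K_Idl_def ideal_of_sieve_def
  proof (rule CollectI, intro conjI ballI allI impI)
    show "z \<in> {x \<in> carr P c. (cid C c, x) \<in> S}"
      if "y \<in> {x \<in> carr P c. (cid C c, x) \<in> S}" "z \<in> carr P c" "leq P c z y" for y z
      using that down_closed by blast
    show "x \<in> {x \<in> carr P c. (cid C c, x) \<in> S}"
      if "x \<in> carr P c" "F \<subseteq> down_set (carr P c) (leq P c) x"
        "J c x (gen_sieve (carr P c) (leq P c) F)" "F \<subseteq> {x \<in> carr P c. (cid C c, x) \<in> S}" for x F
      using that cover_closed[of x F] by blast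
  qed auto
qed

lemma ex_image_cover_subset_down_set:
  assumes f: "f \<in> arr C" and x: "x \<in> carr P (cdom C f)" and G: "J (cdom C f) x G"
  shows "ex f ` G \<subseteq> down_set (carr P (ccod C f)) (leq P (ccod C f)) (ex f x)"
proof
  fix w assume "w \<in> ex f ` G"
  then obtain z where z: "z \<in> G" "w = ex f z" by blast
  have "z \<in> carr P (cdom C f)" "leq P (cdom C f) z x"
    using cover_subset_down_set[OF cdom_in_obj[OF f] G] z(1) unfolding down_set_def by auto
  then show "w \<in> down_set (carr P (ccod C f)) (leq P (ccod C f)) (ex f x)"
    using ex_mono[OF f _ x] ex_in_carr[OF f] z(2) unfolding down_set_def by auto
qed

lemma sieve_of_ideal_in_geom_compl:
  assumes I: "I \<in> ideal_compl P J c" and c: "c \<in> obj C"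
  shows "sieve_of_ideal C P ex c I \<in> geom_compl C P ex J c"
proof -
  let ?S = "sieve_of_ideal C P ex c I"
  have precomp: "(ccomp C f g, y) \<in> ?S"
    if fx: "(f,x) \<in> ?S" and g: "g \<in> arr C" "ccod C g = cdom C f"
      and y: "y \<in> carr P (cdom C g)" "leq P (cdom C g) y (reidx P g x)" for f x g y
  proof -
    have f: "f \<in> arr C" "ccod C f = c" "x \<in> carr P (cdom C f)" "ex f x \<in> I"
      using fx unfolding sieve_of_ideal_def by auto
    have fg: "ccomp C f g \<in> arr C" "cdom C (ccomp C f g) = cdom C g" "ccod C (ccomp C f g) = c"
      using ccomp_in_arr cdom_ccomp ccod_ccomp g f by auto
    have e: "ex f x \<in> carr P (ccod C f)" using ex_in_carr f by blast
    have "leq P (cdom C g) (reidx P g x) (reidx P g (reidx P f (ex f x)))"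
      using reidx_mono[of g x "reidx P f (ex f x)"] g f reidx_in_carr e leq_reidx_ex by simp
    moreover have "reidx P g x \<in> carr P (cdom C g)"
      "reidx P g (reidx P f (ex f x)) \<in> carr P (cdom C g)"
      using reidx_in_carr[OF g(1)] reidx_in_carr[OF f(1) e] g(2) f(3) by simp_all
    ultimately have "leq P (cdom C g) y (reidx P (ccomp C f g) (ex f x))"
      using leq_trans[OF cdom_in_obj[OF g(1)] y(1)] y(2) reidx_ccomp[OF g(1) f(1) g(2) e] by metis
    then have "leq P c (ex (ccomp C f g) y) (ex f x)"
      using ex_leq_iff[of "ccomp C f g" y "ex f x"] fg y(1) e f(2) by simp
    moreover have "ex (ccomp C f g) y \<in> carr P c"
      using ex_in_carr[of "ccomp C f g" y] fg y(1) by simp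
    ultimately have "ex (ccomp C f g) y \<in> I"
      using mem_ideal_complD(2)[OF I f(4)] by blast
    then show ?thesis
      unfolding sieve_of_ideal_def using fg y(1) by simp
  qed
  have cover_closed: "(f,x) \<in> ?S"
    if f: "f \<in> arr C" "ccod C f = c" and x: "x \<in> carr P (cdom C f)"
      and H: "H \<subseteq> arrows_into C P (cdom C f) x" "exi_cov C P ex J (cdom C f) x H"
      and HS: "\<forall>(h,y)\<in>H. (ccomp C f h, y) \<in> ?S" for f x H
  proof -
    let ?d = "cdom C f"
    let ?G = "gen_sieve (carr P ?d) (leq P ?d) {ex h y | h y. (h,y) \<in> H}"
    have G: "J ?d x ?G" using H(2) unfolding exi_cov_def .
    have image_in_I: "ex f ` ?G \<subseteq> I"
    proof
      fix w assume "w \<in> ex f ` ?G"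
      then obtain z h y where z: "w = ex f z" "z \<in> carr P ?d" "leq P ?d z (ex h y)" and hy: "(h,y) \<in> H"
        unfolding gen_sieve_def by blast
      have h: "h \<in> arr C" "ccod C h = ?d" "y \<in> carr P (cdom C h)"
        using H(1) hy unfolding arrows_into_def by auto
      have fh: "ccomp C f h \<in> arr C" "cdom C (ccomp C f h) = cdom C h" "ccod C (ccomp C f h) = c"
        using ccomp_in_arr cdom_ccomp ccod_ccomp h f by auto
      have ehy: "ex h y \<in> carr P ?d" using ex_in_carr h by metis
      have "leq P c (ex f z) (ex f (ex h y))" using ex_mono[OF f(1) z(2) ehy z(3)] f(2) by simp
      moreover have "leq P c (ex f (ex h y)) (ex (ccomp C f h) y)"
        using ex_ex_leq_ex_ccomp[OF f(1) h] f(2) by simp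
      moreover have "ex f z \<in> carr P c" "ex f (ex h y) \<in> carr P c" "ex (ccomp C f h) y \<in> carr P c"
        using ex_in_carr[OF f(1) z(2)] ex_in_carr[OF f(1) ehy] ex_in_carr[of "ccomp C f h" y] fh h f(2)
        by auto
      moreover have "ex (ccomp C f h) y \<in> I"
        using HS hy unfolding sieve_of_ideal_def by auto
      ultimately show "w \<in> I"
        using mem_ideal_complD(2)[OF I] leq_trans[OF c] z(1) by metis
    qed
    have "ex f x \<in> I"
      using mem_ideal_complD(3)[OF I _ _ _ image_in_I] ex_preserves_covers[OF f(1) G]
        ex_image_cover_subset_down_set[OF f(1) x G] ex_in_carr[OF f(1) x] f(2) by simp
    then show ?thesis
      unfolding sieve_of_ideal_def using f x by simp
  qed
  show ?thesis
    unfolding geom_compl_def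
  proof (rule CollectI, intro conjI)
    show "?S \<subseteq> {(f,x). f \<in> arr C \<and> ccod C f = c \<and> x \<in> carr P (cdom C f)}"
      unfolding sieve_of_ideal_def by auto
  qed (use precomp cover_closed in blast)+
qed

lemma ideal_of_sieve_of_ideal:
  assumes I: "I \<in> ideal_compl P J c" and c: "c \<in> obj C"
  shows "ideal_of_sieve C P c (sieve_of_ideal C P ex c I) = I"
proof
  show "ideal_of_sieve C P c (sieve_of_ideal C P ex c I) \<subseteq> I"
    unfolding ideal_of_sieve_def sieve_of_ideal_def
    using c mem_ideal_complD(2)[OF I] leq_ex_cid[OF c] by auto
  show "I \<subseteq> ideal_of_sieve C P c (sieve_of_ideal C P ex c I)"
  proof
    fix x assume x: "x \<in> I"
    have xc: "x \<in> carr P c" using mem_ideal_complD(1)[OF I] x by blast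
    have "ex (cid C c) x \<in> I"
      using mem_ideal_complD(2)[OF I x _ ex_cid_leq[OF c xc]] ex_in_carr[of "cid C c" x] c xc by simp
    then show "x \<in> ideal_of_sieve C P c (sieve_of_ideal C P ex c I)"
      unfolding ideal_of_sieve_def sieve_of_ideal_def using c xc by simp
  qed
qed

lemma ideal_of_sieve_subset_iff:
  assumes S: "S \<in> geom_compl C P ex J c" and T: "T \<in> geom_compl C P ex J c"
  shows "ideal_of_sieve C P c S \<subseteq> ideal_of_sieve C P c T \<longleftrightarrow> S \<subseteq> T"
proof
  assume ST: "ideal_of_sieve C P c S \<subseteq> ideal_of_sieve C P c T"
  show "S \<subseteq> T"
  proof (rule subrelI)
    fix f x assume fx: "(f,x) \<in> S"
    have f: "f \<in> arr C" "ccod C f = c" "x \<in> carr P (cdom C f)"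
      using mem_geom_complD(1)[OF S fx] by auto
    have "ex f x \<in> ideal_of_sieve C P c S"
      using mem_geom_compl_iff_ex[OF S f] fx ex_in_carr[OF f(1,3)] f(2)
      unfolding ideal_of_sieve_def by simp
    then show "(f,x) \<in> T"
      using ST mem_geom_compl_iff_ex[OF T f] unfolding ideal_of_sieve_def by auto
  qed
qed (auto simp: ideal_of_sieve_def)

lemma bij_betw_ideal_of_sieve:
  assumes c: "c \<in> obj C"
  shows "bij_betw (ideal_of_sieve C P c) (geom_compl C P ex J c) (ideal_compl P J c)"
proof (rule bij_betw_imageI)
  show "inj_on (ideal_of_sieve C P c) (geom_compl C P ex J c)"
    by (rule inj_onI) (metis ideal_of_sieve_subset_iff subset_antisym order_refl)
  show "ideal_of_sieve C P c ` geom_compl C P ex J c = ideal_compl P J c"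
  proof
    show "ideal_of_sieve C P c ` geom_compl C P ex J c \<subseteq> ideal_compl P J c"
      using ideal_of_sieve_in_ideal_compl[OF _ c] by blast
    show "ideal_compl P J c \<subseteq> ideal_of_sieve C P c ` geom_compl C P ex J c"
      using ideal_of_sieve_of_ideal[OF _ c, symmetric] sieve_of_ideal_in_geom_compl[OF _ c]
      by blast
  qed
qed

lemma ideal_of_sieve_geom_compl_map:
  assumes f: "f \<in> arr C" and S: "S \<in> geom_compl C P ex J (ccod C f)"
  shows "ideal_of_sieve C P (cdom C f) (geom_compl_map C P f S) =
         ideal_compl_map C P ex f (ideal_of_sieve C P (ccod C f) S)"
proof -
  have d: "cdom C f \<in> obj C" using cdom_in_obj[OF f] .
  have "y \<in> ideal_of_sieve C P (cdom C f) (geom_compl_map C P f S) \<longleftrightarrow>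
        y \<in> ideal_compl_map C P ex f (ideal_of_sieve C P (ccod C f) S)" for y
  proof -
    have "y \<in> ideal_of_sieve C P (cdom C f) (geom_compl_map C P f S) \<longleftrightarrow>
          y \<in> carr P (cdom C f) \<and> (f, y) \<in> S"
      unfolding ideal_of_sieve_def geom_compl_map_def using d ccomp_cid_right[OF f] by auto
    also have "\<dots> \<longleftrightarrow> y \<in> carr P (cdom C f) \<and> (cid C (ccod C f), ex f y) \<in> S"
      using mem_geom_compl_iff_ex[OF S f] by blast
    also have "\<dots> \<longleftrightarrow> y \<in> ideal_compl_map C P ex f (ideal_of_sieve C P (ccod C f) S)"
      unfolding ideal_of_sieve_def ideal_compl_map_def using ex_in_carr[OF f] by auto
    finally show ?thesis .
  qed
  then show ?thesis by blast
qed

end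

theorem proposition5p5:
  fixes C :: "('o,'m) cat" and P :: "('o,'m,'x) doctrine"
    and ex :: "'m \<Rightarrow> 'x \<Rightarrow> 'x" and J :: "'o \<Rightarrow> 'x \<Rightarrow> 'x set \<Rightarrow> bool"
  assumes "existential_doctrinal_site C P ex J"
  shows "\<exists>\<phi> :: 'o \<Rightarrow> ('m \<times> 'x) set \<Rightarrow> 'x set.
     (\<forall>c\<in>obj C. bij_betw (\<phi> c) (geom_compl C P ex J c) (ideal_compl P J c) \<and>
        (\<forall>S\<in>geom_compl C P ex J c. \<forall>T\<in>geom_compl C P ex J c. S \<subseteq> T \<longleftrightarrow> \<phi> c S \<subseteq> \<phi> c T)) \<and>
     (\<forall>f\<in>arr C. \<forall>S\<in>geom_compl C P ex J (ccod C f).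
        \<phi> (cdom C f) (geom_compl_map C P f S) = ideal_compl_map C P ex f (\<phi> (ccod C f) S))"
proof -
  interpret existential_site C P ex J
    using assms by (rule existential_site_if_existential_doctrinal_site)
  show ?thesis
  proof (intro exI[of _ "ideal_of_sieve C P"] conjI ballI)
    show "bij_betw (ideal_of_sieve C P c) (geom_compl C P ex J c) (ideal_compl P J c)"
      if "c \<in> obj C" for c
      using bij_betw_ideal_of_sieve[OF that] .
    show "S \<subseteq> T \<longleftrightarrow> ideal_of_sieve C P c S \<subseteq> ideal_of_sieve C P c T"
      if "S \<in> geom_compl C P ex J c" "T \<in> geom_compl C P ex J c" for c S T
      using ideal_of_sieve_subset_iff[OF that] by (rule sym)
  qed (rule ideal_of_sieve_geom_compl_map)
qed

end
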